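(* Let $d\ge1$, $n\ge2$ be integers, $\kappa_d$ the volume of the $d$-dimensional unit ball, $V\ge0$, $c\in(0,\infty)$, $-d/2<\tau_1<\dots<\tau_n$ reals, $a_i=\tau_i+d$, $x_i=\tau_i+d/2$. Let $\Sigma_n^{\mathrm{sb}}$ have entries $\frac{Vd\kappa_d}{2(x_i+x_j)}$, $\Sigma_n^{\mathrm{sp}}$ entries $\frac{Vd^2\kappa_d^2}{a_ia_j}$, and $\Sigma_n^{\mathrm{cr}}=\Sigma_n^{\mathrm{sb}}+c\Sigma_n^{\mathrm{sp}}$ if $c\le1$, $\Sigma_n^{\mathrm{cr}}=\frac1c\Sigma_n^{\mathrm{sb}}+\Sigma_n^{\mathrm{sp}}$ if $c>1$, with eigenvalues $\lambda_1^{\mathrm{cr}}\le\dots\le\lambda_n^{\mathrm{cr}}$. Put $Q=\sum_{l,k=1}^n\frac{n}{(x_k+x_l)^2}-\big(\sum_{i=1}^n\frac1{2x_i}\big)^2$, $$\bar S_n=\frac{Vd\kappa_d\big(\sum_{i=1}^n\frac1{2x_i}+\sqrt{(n-1)Q}\big)}{2n},\qquad \underline S_n=\frac{Vd\kappa_d\prod_{1\le i<j\le n}(x_i-x_j)^2}{2\prod_{1\le i,j\le n}(x_i+x_j)\Big(\frac{\sum_{i=1}^n\frac{\sqrt{n-1}}{2x_i}+\sqrt Q}{n\sqrt{n-1}}\Big)^{n-1}}.$$ Then $\underline U_n\le\lambda_1^{\mathrm{cr}}\le\dots\le\lambda_n^{\mathrm{cr}}\le\bar U_n$, where (i) for $c\in(0,1]$: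 $\underline U_n=\underline S_n$ and $\bar U_n=\bar S_n+\sum_{i=1}^n\frac{cVd^2\kappa_d^2}{a_i^2}$; (ii) for $c\in(1,\infty)$: $\underline U_n=\underline S_n/c$ and $\bar U_n=\bar S_n/c+\sum_{i=1}^n\frac{Vd^2\kappa_d^2}{a_i^2}$.
   Context: $\Sigma_n^{\mathrm{cr}}$ is the asymptotic covariance matrix of normalized length power functionals in the critical regime $t\delta_t^d\to c$. *)

theory Defs
  imports "HOL-Analysis.Ball_Volume" "Jordan_Normal_Form.Char_Poly"
begin

text \<open>Indices are 0-based: i ranges over 0..n-1 (paper: 1..n).
  kappa_d = unit_ball_vol d is the volume of the d-dimensional unit ball.\<close>

definition x_par :: "nat \<Rightarrow> (nat \<Rightarrow> real) \<Rightarrow> nat \<Rightarrow> real" where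
  "x_par d \<tau> i = \<tau> i + real d / 2"

definition a_par :: "nat \<Rightarrow> (nat \<Rightarrow> real) \<Rightarrow> nat \<Rightarrow> real" where
  "a_par d \<tau> i = \<tau> i + real d"

definition Sigma_sb :: "nat \<Rightarrow> nat \<Rightarrow> real \<Rightarrow> (nat \<Rightarrow> real) \<Rightarrow> real mat" where
  "Sigma_sb n d V \<tau> = mat n n (\<lambda>(i,j).
      V * real d * unit_ball_vol (real d) / (2 * (x_par d \<tau> i + x_par d \<tau> j)))"

definition Sigma_sp :: "nat \<Rightarrow> nat \<Rightarrow> real \<Rightarrow> (nat \<Rightarrow> real) \<Rightarrow> real mat" where
  "Sigma_sp n d V \<tau> = mat n n (\<lambda>(i,j).
      V * real d ^ 2 * unit_ball_vol (real d) ^ 2 / (a_par d \<tau> i * a_par d \<tau> j))"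

definition Sigma_cr :: "nat \<Rightarrow> nat \<Rightarrow> real \<Rightarrow> real \<Rightarrow> (nat \<Rightarrow> real) \<Rightarrow> real mat" where
  "Sigma_cr n d V c \<tau> =
     (if c \<le> 1 then Sigma_sb n d V \<tau> + c \<cdot>\<^sub>m Sigma_sp n d V \<tau>
      else (1 / c) \<cdot>\<^sub>m Sigma_sb n d V \<tau> + Sigma_sp n d V \<tau>)"

definition Q_par :: "nat \<Rightarrow> nat \<Rightarrow> (nat \<Rightarrow> real) \<Rightarrow> real" where
  "Q_par n d \<tau> = (\<Sum>l<n. \<Sum>k<n. real n / (x_par d \<tau> k + x_par d \<tau> l)^2)
                 - (\<Sum>i<n. 1 / (2 * x_par d \<tau> i))^2"

definition S_upper :: "nat \<Rightarrow> nat \<Rightarrow> real \<Rightarrow> (nat \<Rightarrow> real) \<Rightarrow> real" where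
  "S_upper n d V \<tau> = V * real d * unit_ball_vol (real d) *
     ((\<Sum>i<n. 1 / (2 * x_par d \<tau> i)) + sqrt ((real n - 1) * Q_par n d \<tau>)) / (2 * real n)"

definition S_lower :: "nat \<Rightarrow> nat \<Rightarrow> real \<Rightarrow> (nat \<Rightarrow> real) \<Rightarrow> real" where
  "S_lower n d V \<tau> = V * real d * unit_ball_vol (real d) *
     (\<Prod>j<n. \<Prod>i<j. (x_par d \<tau> i - x_par d \<tau> j)^2) /
     (2 * (\<Prod>i<n. \<Prod>j<n. x_par d \<tau> i + x_par d \<tau> j) *
      (((\<Sum>i<n. sqrt (real n - 1) / (2 * x_par d \<tau> i)) + sqrt (Q_par n d \<tau>))
        / (real n * sqrt (real n - 1))) ^ (n - 1))"

end

theory Submission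
  imports Defs
begin

text \<open>
  If u is a unit eigenvector for the eigenvalue l, then l is a positive combination of the
  Rayleigh quotient rho = u' C u of the Cauchy matrix C = (1/(x_i + x_j)) and of
  (sum_i u_i/a_i)^2, which lies between 0 and sum_i 1/a_i^2 by Cauchy-Schwarz.
  For any n x n matrix with trace T and squared Frobenius norm F, Cauchy-Schwarz for the
  Frobenius inner product of A - (T/n) I and u u' - I/n gives
  |rho - T/n| <= sqrt ((n-1)(nF - T^2))/n, which is the upper bound.
  For the lower bound, a Householder reflection moves u to the first basis vector; in the new
  basis the first diagonal entry of the positive semidefinite matrix C is rho, so Hadamard's
  inequality and AM-GM for the other diagonal entries give det C <= rho ((T - rho)/(n-1))^(n-1).
  The last factor is bounded by the first estimate, and det C is Cauchy's determinant.
\<close>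

section \<open>Quadratic forms\<close>

definition quad_form :: "nat \<Rightarrow> 'a::comm_semiring_1 mat \<Rightarrow> (nat \<Rightarrow> 'a) \<Rightarrow> 'a" where
  "quad_form n A x = (\<Sum>i<n. \<Sum>j<n. x i * A $$ (i,j) * x j)"

definition symmetric_mat :: "nat \<Rightarrow> 'a mat \<Rightarrow> bool" where
  "symmetric_mat n A \<longleftrightarrow> (\<forall>i<n. \<forall>j<n. A $$ (i,j) = A $$ (j,i))"

definition psd_mat :: "nat \<Rightarrow> 'a::linordered_idom mat \<Rightarrow> bool" where
  "psd_mat n A \<longleftrightarrow> (\<forall>x. 0 \<le> quad_form n A x)"

lemma sum_mult_delta:
  fixes f :: "nat \<Rightarrow> 'a::comm_semiring_1"
  assumes "k < n"
  shows "(\<Sum>j<n. f j * (if j = k then 1 else 0)) = f k"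
    and "(\<Sum>j<n. (if j = k then 1 else 0) * f j) = f k"
  using assms by (simp_all add: if_distrib[of "\<lambda>y. f _ * y"] if_distrib[of "\<lambda>y. y * f _"] cong: if_cong)

lemma sum_if_eq:
  fixes Y :: "nat \<Rightarrow> 'a::ab_group_add"
  assumes "i < n"
  shows "(\<Sum>j<n. if j = i then X else Y j) = (\<Sum>j<n. Y j) - Y i + X"
proof -
  have "(\<Sum>j<n. if j = i then X else Y j) = (\<Sum>j<n. Y j + (if j = i then X - Y j else 0))"
    by (rule sum.cong) auto
  also have "\<dots> = (\<Sum>j<n. Y j) + (X - Y i)" using assms by (simp add: sum.distrib)
  finally show ?thesis by simp
qed

lemma index_mult_mat_sum:
  assumes "A \<in> carrier_mat n m" "B \<in> carrier_mat m p" "i < n" "j < p"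
  shows "(A * B) $$ (i,j) = (\<Sum>k<m. A $$ (i,k) * B $$ (k,j))"
  using assms by (simp add: scalar_prod_def atLeast0LessThan)

lemma quad_form_unit_vector:
  "k < n \<Longrightarrow> quad_form n A (\<lambda>i. if i = k then 1 else 0) = A $$ (k,k)"
  unfolding quad_form_def by (simp add: sum_mult_delta)

lemma psd_mat_diag_nonneg: "psd_mat n A \<Longrightarrow> k < n \<Longrightarrow> 0 \<le> A $$ (k,k)"
  unfolding psd_mat_def by (metis quad_form_unit_vector)

lemma quad_form_add:
  "A \<in> carrier_mat n n \<Longrightarrow> B \<in> carrier_mat n n \<Longrightarrow> quad_form n (A + B) x = quad_form n A x + quad_form n B x"
  unfolding quad_form_def by (simp add: sum.distrib[symmetric] algebra_simps)

lemma quad_form_smult_mat: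
  "A \<in> carrier_mat n n \<Longrightarrow> quad_form n (c \<cdot>\<^sub>m A) x = c * quad_form n A x"
  unfolding quad_form_def by (simp add: sum_distrib_left mult_ac)

lemma quad_form_smult_vec:
  "quad_form n A (\<lambda>i. r * x i) = r^2 * quad_form n A (x :: nat \<Rightarrow> 'a::comm_semiring_1)"
  unfolding quad_form_def by (simp add: sum_distrib_left power2_eq_square mult_ac)

lemma quad_form_rescaled_mat:
  "quad_form n (mat n n (\<lambda>(i,j). a i * M $$ (i,j) * a j)) y = quad_form n M (\<lambda>i. a i * y i)"
  unfolding quad_form_def by (intro sum.cong refl) (simp add: mult_ac)

lemma quad_form_eigenvector:
  fixes M :: "'a::comm_ring_1 mat"
  assumes M: "M \<in> carrier_mat n n" and v: "v \<in> carrier_vec n" and e: "M *\<^sub>v v = l \<cdot>\<^sub>v v"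
  shows "quad_form n M (\<lambda>i. v $ i) = l * (\<Sum>i<n. (v $ i)^2)"
proof -
  have row: "(\<Sum>j<n. M $$ (i,j) * v $ j) = l * v $ i" if "i < n" for i
  proof -
    have "(M *\<^sub>v v) $ i = (\<Sum>j<n. M $$ (i,j) * v $ j)"
      using M v that by (simp add: scalar_prod_def atLeast0LessThan)
    then show ?thesis using e v that by simp
  qed
  have "quad_form n M (\<lambda>i. v $ i) = (\<Sum>i<n. v $ i * (\<Sum>j<n. M $$ (i,j) * v $ j))"
    unfolding quad_form_def by (simp add: sum_distrib_left mult.assoc)
  also have "\<dots> = (\<Sum>i<n. v $ i * (l * v $ i))"
    by (intro sum.cong refl) (simp add: row)
  finally show ?thesis by (simp add: sum_distrib_left power2_eq_square mult_ac)
qed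

lemma eigenvalue_unit_quad_form:
  fixes M :: "real mat"
  assumes M: "M \<in> carrier_mat n n" and "eigenvalue M l"
  obtains u where "(\<Sum>i<n. (u i)^2) = 1" and "quad_form n M u = l"
proof -
  obtain v where v: "v \<in> carrier_vec n" "v \<noteq> 0\<^sub>v n" and e: "M *\<^sub>v v = l \<cdot>\<^sub>v v"
    using assms unfolding eigenvalue_def eigenvector_def by auto
  define N where "N = (\<Sum>i<n. (v $ i)^2)"
  have "N > 0"
  proof -
    obtain i where "i < n" "v $ i \<noteq> 0" using v by (auto simp: vec_eq_iff)
    then have "0 < (v $ i)^2" "(v $ i)^2 \<le> N"
      unfolding N_def by (auto intro: member_le_sum)
    then show ?thesis by linarith
  qed
  define u where "u = (\<lambda>i. 1 / sqrt N * v $ i)"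
  have "(\<Sum>i<n. (u i)^2) = 1"
    using \<open>N > 0\<close> by (simp add: u_def power_divide sum_divide_distrib[symmetric] N_def[symmetric])
  moreover have "quad_form n M u = l"
    using \<open>N > 0\<close> unfolding u_def quad_form_smult_vec quad_form_eigenvector[OF M v(1) e] N_def[symmetric]
    by (simp add: power_divide)
  ultimately show thesis by (rule that)
qed

section \<open>Schur complements and Cauchy matrices\<close>

definition schur_compl :: "nat \<Rightarrow> 'a::field mat \<Rightarrow> 'a mat" where
  "schur_compl n A = mat n n (\<lambda>(i,j). A $$ (Suc i, Suc j) - A $$ (Suc i, 0) * A $$ (0, Suc j) / A $$ (0,0))"

lemma schur_compl_carrier: "schur_compl n A \<in> carrier_mat n n"
  by (simp add: schur_compl_def)

lemma index_first_column_elimination: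
  fixes A :: "'a::field mat"
  assumes A: "A \<in> carrier_mat (Suc n) (Suc n)" and ij: "i < Suc n" "j < Suc n"
  defines "E \<equiv> mat (Suc n) (Suc n) (\<lambda>(i,j). if i = j then 1 else if j = 0 then - A $$ (i,0) / A $$ (0,0) else 0)"
  shows "(E * A) $$ (i,j) = (if i = 0 then A $$ (0,j) else A $$ (i,j) - A $$ (i,0) / A $$ (0,0) * A $$ (0,j))"
proof -
  have E: "E \<in> carrier_mat (Suc n) (Suc n)" unfolding E_def by auto
  have "(E * A) $$ (i,j) = (\<Sum>k<Suc n. (if k = i then 1 else if k = 0 then - A $$ (i,0) / A $$ (0,0) else 0) * A $$ (k,j))"
    unfolding index_mult_mat_sum[OF E A ij] by (rule sum.cong) (auto simp: E_def ij)
  also have "\<dots> = (if i = 0 then A $$ (0,j) else A $$ (i,j) - A $$ (i,0) / A $$ (0,0) * A $$ (0,j))"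
  proof (cases "i = 0")
    case True
    then have "(\<Sum>k<Suc n. (if k = i then 1 else if k = 0 then - A $$ (i,0) / A $$ (0,0) else 0) * A $$ (k,j))
        = (\<Sum>k<Suc n. (if k = 0 then 1 else 0) * A $$ (k,j))"
      by (intro sum.cong) auto
    also have "\<dots> = A $$ (0,j)" by (rule sum_mult_delta(2)) simp
    finally show ?thesis using True by simp
  next
    case False
    have "(\<Sum>k<Suc n. (if k = i then 1 else if k = 0 then - A $$ (i,0) / A $$ (0,0) else 0) * A $$ (k,j))
        = (\<Sum>k<Suc n. (if k = i then 1 else 0) * A $$ (k,j))
          - A $$ (i,0) / A $$ (0,0) * (\<Sum>k<Suc n. (if k = 0 then 1 else 0) * A $$ (k,j))"
      unfolding sum_distrib_left sum_subtractf[symmetric] using False by (intro sum.cong) auto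
    also have "\<dots> = A $$ (i,j) - A $$ (i,0) / A $$ (0,0) * A $$ (0,j)"
      using ij by (simp only: sum_mult_delta(2) zero_less_Suc)
    finally show ?thesis using False by simp
  qed
  finally show ?thesis .
qed

lemma det_schur_compl:
  fixes A :: "'a::field mat"
  assumes A: "A \<in> carrier_mat (Suc n) (Suc n)" and "A $$ (0,0) \<noteq> 0"
  shows "det A = A $$ (0,0) * det (schur_compl n A)"
proof -
  define E where "E = mat (Suc n) (Suc n) (\<lambda>(i,j). if i = j then 1 else if j = 0 then - A $$ (i,0) / A $$ (0,0) else 0)"
  have E: "E \<in> carrier_mat (Suc n) (Suc n)" unfolding E_def by auto
  have EA: "E * A \<in> carrier_mat (Suc n) (Suc n)" using E A by auto
  note EA_entry = index_first_column_elimination[OF A, folded E_def]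
  have "det E = prod_list (diag_mat E)"
    by (rule det_lower_triangular[OF _ E]) (auto simp: E_def)
  also have "diag_mat E = map (\<lambda>i. 1) [0..<Suc n]" unfolding diag_mat_def E_def by auto
  finally have "det E = 1" by (simp add: map_replicate_const)
  then have "det A = det (E * A)" using det_mult[OF E A] by simp
  also have "\<dots> = (\<Sum>i<Suc n. (E * A) $$ (i,0) * cofactor (E * A) i 0)"
    by (rule laplace_expansion_column[OF EA]) simp
  also have "\<dots> = A $$ (0,0) * det (mat_delete (E * A) 0 0)"
    by (subst sum.lessThan_Suc_shift) (simp add: EA_entry cofactor_def assms(2))
  also have "mat_delete (E * A) 0 0 = schur_compl n A"
    by (rule eq_matI) (use EA in \<open>auto simp: mat_delete_def schur_compl_def EA_entry simp del: index_mult_mat\<close>)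
  finally show ?thesis .
qed

lemma quad_form_Suc:
  fixes A :: "real mat"
  assumes "symmetric_mat (Suc n) A"
  shows "quad_form (Suc n) A x = x 0 * A $$ (0,0) * x 0 + 2 * x 0 * (\<Sum>j<n. A $$ (0, Suc j) * x (Suc j))
     + (\<Sum>i<n. \<Sum>j<n. x (Suc i) * A $$ (Suc i, Suc j) * x (Suc j))"
proof -
  have "quad_form (Suc n) A x = x 0 * A $$ (0,0) * x 0 + (\<Sum>i<n. x (Suc i) * A $$ (Suc i, 0) * x 0)
     + ((\<Sum>j<n. x 0 * A $$ (0, Suc j) * x (Suc j)) + (\<Sum>i<n. \<Sum>j<n. x (Suc i) * A $$ (Suc i, Suc j) * x (Suc j)))"
    unfolding quad_form_def by (simp only: sum.lessThan_Suc_shift sum.distrib)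
  also have "(\<Sum>i<n. x (Suc i) * A $$ (Suc i, 0) * x 0) = (\<Sum>j<n. x 0 * A $$ (0, Suc j) * x (Suc j))"
    using assms unfolding symmetric_mat_def by (intro sum.cong) (auto simp: mult_ac)
  finally show ?thesis by (simp add: sum_distrib_left mult_ac)
qed

lemma quad_form_schur_compl:
  fixes A :: "real mat"
  assumes sym: "symmetric_mat (Suc n) A" and s: "A $$ (0,0) > 0"
  shows "quad_form (Suc n) A x = A $$ (0,0) * (x 0 + (\<Sum>j<n. A $$ (0, Suc j) * x (Suc j)) / A $$ (0,0))^2
      + quad_form n (schur_compl n A) (\<lambda>i. x (Suc i))"
proof -
  define s where "s = A $$ (0,0)"
  define b where "b = (\<Sum>j<n. A $$ (0, Suc j) * x (Suc j))"
  have "quad_form n (schur_compl n A) (\<lambda>i. x (Suc i)) = (\<Sum>i<n. \<Sum>j<n. x (Suc i) * A $$ (Suc i, Suc j) * x (Suc j)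
      - (x (Suc i) * A $$ (0, Suc i)) * (A $$ (0, Suc j) * x (Suc j)) / s)"
    using sym unfolding quad_form_def schur_compl_def s_def symmetric_mat_def
    by (intro sum.cong refl) (auto simp: algebra_simps)
  also have "\<dots> = (\<Sum>i<n. \<Sum>j<n. x (Suc i) * A $$ (Suc i, Suc j) * x (Suc j)) - b * b / s"
    by (simp add: sum_subtractf b_def sum_divide_distrib[symmetric] sum_product mult_ac)
  finally have "quad_form n (schur_compl n A) (\<lambda>i. x (Suc i))
      = (\<Sum>i<n. \<Sum>j<n. x (Suc i) * A $$ (Suc i, Suc j) * x (Suc j)) - b * b / s" .
  moreover have "s * (x 0 + b/s)^2 = x 0 * s * x 0 + 2 * x 0 * b + b*b/s"
    using s by (simp add: s_def field_simps power2_eq_square)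
  ultimately show ?thesis unfolding quad_form_Suc[OF sym] s_def[symmetric] b_def[symmetric]
    by linarith
qed

lemma symmetric_schur_compl: "symmetric_mat (Suc n) A \<Longrightarrow> symmetric_mat n (schur_compl n A)"
  unfolding symmetric_mat_def schur_compl_def by auto

lemma psd_iff_psd_schur_compl:
  fixes A :: "real mat"
  assumes "symmetric_mat (Suc n) A" "A $$ (0,0) > 0"
  shows "psd_mat (Suc n) A \<longleftrightarrow> psd_mat n (schur_compl n A)"
proof
  assume psd: "psd_mat (Suc n) A"
  show "psd_mat n (schur_compl n A)" unfolding psd_mat_def
  proof
    fix y
    \<comment> \<open>the first coordinate is chosen to annihilate the square in the completion\<close>
    define x where "x = (\<lambda>i. if i = 0 then - (\<Sum>j<n. A $$ (0, Suc j) * y j) / A $$ (0,0) else y (i - 1))"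
    have "0 \<le> quad_form (Suc n) A x" using psd psd_mat_def by blast
    also have "\<dots> = quad_form n (schur_compl n A) y" unfolding quad_form_schur_compl[OF assms] by (simp add: x_def)
    finally show "0 \<le> quad_form n (schur_compl n A) y" .
  qed
next
  assume "psd_mat n (schur_compl n A)"
  then show "psd_mat (Suc n) A" using assms(2) unfolding psd_mat_def quad_form_schur_compl[OF assms]
    by (auto intro!: add_nonneg_nonneg)
qed

lemma det_rescaled_mat:
  fixes M :: "'a::comm_ring_1 mat"
  assumes M: "M \<in> carrier_mat n n"
  shows "det (mat n n (\<lambda>(i,j). a i * M $$ (i,j) * b j)) = (\<Prod>i<n. a i) * (\<Prod>j<n. b j) * det M"
proof -
  have "det (mat n n (\<lambda>(i,j). a i * M $$ (i,j) * b j)) =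
     (\<Sum>p\<in>{p. p permutes {0..<n}}. signof p * (\<Prod>i = 0..<n. a i * M $$ (i, p i) * b (p i)))"
    by (subst det_def'[of _ n], simp, intro sum.cong refl arg_cong2[where f="(*)"] prod.cong,
        auto simp: permutes_in_image)
  also have "\<dots> = (\<Sum>p\<in>{p. p permutes {0..<n}}. (\<Prod>i<n. a i) * (\<Prod>j<n. b j) * (signof p * (\<Prod>i = 0..<n. M $$ (i, p i))))"
  proof (rule sum.cong[OF refl])
    fix p assume p: "p \<in> {p. p permutes {0..<n}}"
    have "(\<Prod>i = 0..<n. b (p i)) = (\<Prod>j = 0..<n. b j)"
      using prod.permute[of p "{0..<n}" b] p by (simp add: comp_def)
    then show "signof p * (\<Prod>i = 0..<n. a i * M $$ (i, p i) * b (p i)) = (\<Prod>i<n. a i) * (\<Prod>j<n. b j) * (signof p * (\<Prod>i = 0..<n. M $$ (i, p i)))"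
      by (simp add: prod.distrib atLeast0LessThan)
  qed
  also have "\<dots> = (\<Prod>i<n. a i) * (\<Prod>j<n. b j) * det M"
    by (subst det_def'[OF M], simp add: sum_distrib_left)
  finally show ?thesis .
qed

definition cauchy_mat :: "nat \<Rightarrow> (nat \<Rightarrow> 'a::field) \<Rightarrow> 'a mat" where
  "cauchy_mat n x = mat n n (\<lambda>(i,j). 1 / (x i + x j))"

lemma symmetric_cauchy_mat: "symmetric_mat n (cauchy_mat n x)"
  unfolding symmetric_mat_def cauchy_mat_def by (auto simp: add.commute)

lemma schur_compl_cauchy_mat:
  fixes x :: "nat \<Rightarrow> 'a::field_char_0"
  assumes nz: "\<And>i j. i < Suc n \<Longrightarrow> j < Suc n \<Longrightarrow> x i + x j \<noteq> 0"
  shows "schur_compl n (cauchy_mat (Suc n) x) = mat n n (\<lambda>(i,j).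
     (x (Suc i) - x 0) / (x (Suc i) + x 0) * cauchy_mat n (\<lambda>i. x (Suc i)) $$ (i,j) * ((x (Suc j) - x 0) / (x (Suc j) + x 0)))"
  unfolding schur_compl_def
proof (rule cong_mat[OF refl refl], unfold prod.case)
  fix i j assume ij: "i < n" "j < n"
  have "x (Suc i) + x (Suc j) \<noteq> 0" "x (Suc i) + x 0 \<noteq> 0" "x 0 + x (Suc j) \<noteq> 0" "x (Suc j) + x 0 \<noteq> 0" "x 0 \<noteq> 0"
    using nz[of "Suc i" "Suc j"] nz[of "Suc i" 0] nz[of 0 "Suc j"] nz[of "Suc j" 0] nz[of 0 0] ij by auto
  then show "cauchy_mat (Suc n) x $$ (Suc i, Suc j) - cauchy_mat (Suc n) x $$ (Suc i, 0) * cauchy_mat (Suc n) x $$ (0, Suc j) / cauchy_mat (Suc n) x $$ (0, 0)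
      = (x (Suc i) - x 0) / (x (Suc i) + x 0) * cauchy_mat n (\<lambda>i. x (Suc i)) $$ (i, j) * ((x (Suc j) - x 0) / (x (Suc j) + x 0))"
    using ij by (simp add: cauchy_mat_def divide_simps) (simp add: algebra_simps)
qed

lemma prod_triangle_Suc:
  "(\<Prod>j<Suc n. \<Prod>i<j. f i j) = (\<Prod>j<n. f 0 (Suc j)) * (\<Prod>j<n. \<Prod>i<j. f (Suc i) (Suc j))"
  by (simp only: prod.lessThan_Suc_shift prod.distrib) simp

lemma prod_square_Suc:
  "(\<Prod>i<Suc n. \<Prod>j<Suc n. f i j)
    = f 0 0 * (\<Prod>j<n. f 0 (Suc j)) * (\<Prod>i<n. f (Suc i) 0) * (\<Prod>i<n. \<Prod>j<n. f (Suc i) (Suc j))"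
  by (simp only: prod.lessThan_Suc_shift prod.distrib) (simp only: mult_ac)

lemma det_cauchy_mat:
  fixes x :: "nat \<Rightarrow> 'a::field_char_0"
  assumes "\<And>i j. i < n \<Longrightarrow> j < n \<Longrightarrow> x i + x j \<noteq> 0"
  shows "det (cauchy_mat n x) = (\<Prod>j<n. \<Prod>i<j. (x i - x j)^2) / (\<Prod>i<n. \<Prod>j<n. x i + x j)"
  using assms
proof (induction n arbitrary: x)
  case 0
  then show ?case by (simp add: cauchy_mat_def)
next
  case (Suc n)
  define y where "y = (\<lambda>i. x (Suc i))"
  define r where "r = (\<lambda>i. (y i - x 0) / (y i + x 0))"
  have x0: "x 0 + x 0 \<noteq> 0" "x 0 \<noteq> 0" using Suc.prems[of 0 0] by auto
  have "det (cauchy_mat (Suc n) x) = 1 / (x 0 + x 0) * det (schur_compl n (cauchy_mat (Suc n) x))"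
    using det_schur_compl[of "cauchy_mat (Suc n) x"] x0(1) by (simp add: cauchy_mat_def)
  also have "schur_compl n (cauchy_mat (Suc n) x) = mat n n (\<lambda>(i,j). r i * cauchy_mat n y $$ (i,j) * r j)"
    unfolding r_def y_def by (rule schur_compl_cauchy_mat[OF Suc.prems])
  also have "det \<dots> = (\<Prod>i<n. r i) * (\<Prod>i<n. r i) * det (cauchy_mat n y)"
    by (rule det_rescaled_mat) (simp add: cauchy_mat_def)
  also have "det (cauchy_mat n y) = (\<Prod>j<n. \<Prod>i<j. (y i - y j)^2) / (\<Prod>i<n. \<Prod>j<n. y i + y j)"
    using Suc.IH[of y] Suc.prems by (simp add: y_def)
  finally have L: "det (cauchy_mat (Suc n) x) = 1 / (x 0 + x 0) * ((\<Prod>i<n. r i) * (\<Prod>i<n. r i)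
      * ((\<Prod>j<n. \<Prod>i<j. (y i - y j)^2) / (\<Prod>i<n. \<Prod>j<n. y i + y j)))" .
  have N: "(\<Prod>j<Suc n. \<Prod>i<j. (x i - x j)^2) = (\<Prod>j<n. (y j - x 0)^2) * (\<Prod>j<n. \<Prod>i<j. (y i - y j)^2)"
    unfolding prod_triangle_Suc[of "\<lambda>i j. (x i - x j)^2"] by (simp add: y_def power2_commute)
  have D: "(\<Prod>i<Suc n. \<Prod>j<Suc n. x i + x j)
      = (x 0 + x 0) * (\<Prod>j<n. y j + x 0) * (\<Prod>j<n. y j + x 0) * (\<Prod>i<n. \<Prod>j<n. y i + y j)"
    unfolding prod_square_Suc[of "\<lambda>i j. x i + x j"] by (simp add: y_def add.commute)
  have "(\<Prod>i<n. y i + x 0) \<noteq> 0" "(\<Prod>i<n. \<Prod>j<n. y i + y j) \<noteq> 0"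
    using Suc.prems by (auto simp: y_def prod_zero_iff add.commute)
  moreover have "(\<Prod>j<n. (y j - x 0)^2) = (\<Prod>i<n. y i - x 0) * (\<Prod>i<n. y i - x 0)"
    by (simp add: power2_eq_square prod.distrib)
  ultimately show ?case unfolding L N D using x0 by (simp add: r_def prod_dividef field_simps)
qed

lemma psd_cauchy_mat:
  assumes "\<And>i. i < n \<Longrightarrow> x i > (0::real)"
  shows "psd_mat n (cauchy_mat n x)"
  using assms
proof (induction n arbitrary: x)
  case 0
  then show ?case by (simp add: psd_mat_def quad_form_def)
next
  case (Suc n)
  have "x i + x j \<noteq> 0" if "i < Suc n" "j < Suc n" for i j
    using Suc.prems[OF that(1)] Suc.prems[OF that(2)] by simp
  then have schur: "schur_compl n (cauchy_mat (Suc n) x) = mat n n (\<lambda>(i,j).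
     (x (Suc i) - x 0) / (x (Suc i) + x 0) * cauchy_mat n (\<lambda>i. x (Suc i)) $$ (i,j) * ((x (Suc j) - x 0) / (x (Suc j) + x 0)))"
    by (rule schur_compl_cauchy_mat)
  have "psd_mat n (cauchy_mat n (\<lambda>i. x (Suc i)))" using Suc.IH Suc.prems by auto
  then have "psd_mat n (schur_compl n (cauchy_mat (Suc n) x))"
    unfolding schur psd_mat_def quad_form_rescaled_mat by blast
  moreover have "cauchy_mat (Suc n) x $$ (0,0) > 0" using Suc.prems by (simp add: cauchy_mat_def)
  ultimately show ?case using psd_iff_psd_schur_compl[OF symmetric_cauchy_mat] by blast
qed

section \<open>Hadamard's inequality\<close>

lemma psd_first_row_zero:
  fixes A :: "real mat"
  assumes sym: "symmetric_mat (Suc n) A" and psd: "psd_mat (Suc n) A"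
    and pivot: "A $$ (0,0) = 0" and j: "j < Suc n"
  shows "A $$ (0,j) = 0"
proof (cases j)
  case 0
  then show ?thesis using pivot by simp
next
  case (Suc k)
  with j have k: "k < n" by simp
  \<comment> \<open>with a zero pivot the quadratic form is affine along the first coordinate\<close>
  have affine: "0 \<le> 2 * t * A $$ (0, Suc k) + A $$ (Suc k, Suc k)" for t
  proof -
    have "0 \<le> quad_form (Suc n) A (\<lambda>i. if i = 0 then t else if i = Suc k then 1 else 0)"
      using psd psd_mat_def by blast
    also have "\<dots> = 2 * t * A $$ (0, Suc k) + A $$ (Suc k, Suc k)"
      unfolding quad_form_Suc[OF sym] using pivot k by (simp add: sum_mult_delta)
    finally show ?thesis .
  qed
  show ?thesis
  proof (rule ccontr)
    assume "A $$ (0,j) \<noteq> 0"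
    then have nz: "A $$ (0, Suc k) \<noteq> 0" using Suc by simp
    have "0 \<le> 2 * (- (A $$ (Suc k, Suc k) + 1) / (2 * A $$ (0, Suc k))) * A $$ (0, Suc k) + A $$ (Suc k, Suc k)"
      by (rule affine)
    also have "\<dots> = -1" using nz by (simp add: field_simps)
    finally show False by simp
  qed
qed

lemma hadamard_psd:
  fixes A :: "real mat"
  assumes "A \<in> carrier_mat n n" "symmetric_mat n A" "psd_mat n A"
  shows "det A \<le> (\<Prod>i<n. A $$ (i,i))"
  using assms
proof (induction n arbitrary: A)
  case 0
  then show ?case by simp
next
  case (Suc n)
  note A = Suc.prems(1) and sym = Suc.prems(2) and psd = Suc.prems(3)
  have diag: "(\<Prod>i<Suc n. A $$ (i,i)) = A $$ (0,0) * (\<Prod>i<n. A $$ (Suc i, Suc i))"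
    by (simp only: prod.lessThan_Suc_shift)
  consider "A $$ (0,0) = 0" | "A $$ (0,0) > 0" using psd_mat_diag_nonneg[OF psd, of 0] by linarith
  then show ?case
  proof cases
    case 1
    have "det A = (\<Sum>j<Suc n. A $$ (0,j) * cofactor A 0 j)"
      by (rule laplace_expansion_row[OF A]) simp
    also have "\<dots> = 0" using psd_first_row_zero[OF sym psd 1] by simp
    finally show ?thesis unfolding diag 1 by simp
  next
    case 2
    let ?S = "schur_compl n A"
    have sym': "symmetric_mat n ?S" by (rule symmetric_schur_compl[OF sym])
    have psd': "psd_mat n ?S" using psd_iff_psd_schur_compl[OF sym 2] psd by simp
    have "?S $$ (i,i) \<le> A $$ (Suc i, Suc i)" if "i < n" for i
    proof -
      have "?S $$ (i,i) = A $$ (Suc i, Suc i) - (A $$ (0, Suc i))^2 / A $$ (0,0)"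
        using sym that unfolding schur_compl_def symmetric_mat_def by (auto simp: power2_eq_square)
      then show ?thesis using 2 by simp
    qed
    then have "(\<Prod>i<n. ?S $$ (i,i)) \<le> (\<Prod>i<n. A $$ (Suc i, Suc i))"
      using psd_mat_diag_nonneg[OF psd'] by (intro prod_mono) auto
    moreover have "det ?S \<le> (\<Prod>i<n. ?S $$ (i,i))"
      by (rule Suc.IH[OF schur_compl_carrier sym' psd'])
    moreover have "det A = A $$ (0,0) * det ?S" using det_schur_compl[OF A] 2 by simp
    ultimately show ?thesis unfolding diag using 2 by (simp add: mult_left_mono)
  qed
qed

lemma prod_le_mean_power:
  fixes c :: "nat \<Rightarrow> real"
  assumes m: "m \<ge> 1" and c: "\<And>i. i < m \<Longrightarrow> c i \<ge> 0"
  shows "(\<Prod>i<m. c i) \<le> ((\<Sum>i<m. c i) / m) ^ m"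
proof -
  define P where "P = (\<Prod>i<m. c i)"
  have "P \<ge> 0" unfolding P_def using c by (intro prod_nonneg) auto
  have "(\<Prod>i<m. c i) powr (1 / card {..<m}) \<le> (\<Sum>i<m. c i / card {..<m})"
    by (rule arith_geom_mean) (use m c in \<open>auto simp: lessThan_empty_iff\<close>)
  then have "P powr (1 / m) \<le> (\<Sum>i<m. c i) / m" by (simp add: P_def sum_divide_distrib)
  then have "(P powr (1 / m)) ^ m \<le> ((\<Sum>i<m. c i) / m) ^ m" by (rule power_mono) simp
  moreover have "(P powr (1 / m)) ^ m = P"
    using \<open>P \<ge> 0\<close> m by (cases "P = 0") (simp_all add: powr_realpow[symmetric] powr_powr)
  ultimately show ?thesis by (simp add: P_def)
qed

lemma det_le_pivot_mean_power:
  fixes A :: "real mat"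
  assumes A: "A \<in> carrier_mat (Suc m) (Suc m)" and sym: "symmetric_mat (Suc m) A"
    and psd: "psd_mat (Suc m) A" and m: "m \<ge> 1"
  shows "det A \<le> A $$ (0,0) * ((\<Sum>i<m. A $$ (Suc i, Suc i)) / m) ^ m"
proof -
  have "det A \<le> (\<Prod>i<Suc m. A $$ (i,i))" by (rule hadamard_psd[OF A sym psd])
  also have "\<dots> = A $$ (0,0) * (\<Prod>i<m. A $$ (Suc i, Suc i))"
    by (simp only: prod.lessThan_Suc_shift)
  also have "\<dots> \<le> A $$ (0,0) * ((\<Sum>i<m. A $$ (Suc i, Suc i)) / m) ^ m"
    using psd_mat_diag_nonneg[OF psd]
    by (intro mult_left_mono prod_le_mean_power[OF m]) auto
  finally show ?thesis .
qed

section \<open>Householder reflections\<close>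

lemma householder_mult_self:
  fixes w :: "nat \<Rightarrow> real"
  assumes c: "c \<noteq> 0" and w: "(\<Sum>k<n. w k * w k) = 2 * c"
  defines "H \<equiv> mat n n (\<lambda>(i,j). (if i = j then 1 else 0) - w i * w j / c)"
  shows "H * H = 1\<^sub>m n"
proof (rule eq_matI)
  fix i j assume "i < dim_row (1\<^sub>m n :: real mat)" "j < dim_col (1\<^sub>m n :: real mat)"
  then have ij: "i < n" "j < n" by auto
  have H: "H \<in> carrier_mat n n" by (simp add: H_def)
  have sq: "(\<Sum>k<n. w i * w k / c * (w k * w j / c)) = w i * w j / c^2 * (\<Sum>k<n. w k * w k)"
    unfolding sum_distrib_left by (intro sum.cong refl) (simp add: power2_eq_square)
  have "(H * H) $$ (i,j) = (\<Sum>k<n. ((if k = i then 1 else 0) - w i * w k / c) * ((if k = j then 1 else 0) - w k * w j / c))"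
    unfolding index_mult_mat_sum[OF H H ij] by (intro sum.cong) (auto simp: H_def ij)
  also have "\<dots> = ((\<Sum>k<n. (if k = i then 1 else 0) * (if k = j then 1 else 0)) - (\<Sum>k<n. (if k = i then 1 else 0) * (w k * w j / c)))
      - ((\<Sum>k<n. w i * w k / c * (if k = j then 1 else 0)) - (\<Sum>k<n. w i * w k / c * (w k * w j / c)))"
    by (simp only: left_diff_distrib right_diff_distrib sum_subtractf)
  also have "\<dots> = ((if j = i then 1 else 0) - w i * w j / c) - (w i * w j / c - w i * w j / c^2 * (2 * c))"
    using ij by (simp only: sq w sum_mult_delta)
  also have "\<dots> = (if i = j then 1 else 0)" using c by (auto simp: power2_eq_square)
  finally show "(H * H) $$ (i,j) = 1\<^sub>m n $$ (i,j)" using ij by simp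
qed (auto simp: H_def)

lemma householder_first_column:
  fixes u :: "nat \<Rightarrow> real"
  assumes n: "0 < n" and u: "(\<Sum>i<n. (u i)^2) = 1"
  obtains Q s where "Q \<in> carrier_mat n n" "symmetric_mat n Q" "Q * Q = 1\<^sub>m n" "s^2 = 1"
    "\<And>k. k < n \<Longrightarrow> Q $$ (k,0) = s * u k"
proof -
  define s :: real where "s = (if u 0 \<ge> 0 then -1 else 1)"
  define w where "w = (\<lambda>k. (if k = 0 then 1 else 0) - s * u k)"
  have s: "s^2 = 1" "s * u 0 \<le> 0" by (auto simp: s_def)
  have w0: "w 0 > 0" using s by (simp add: w_def)
  have "(\<Sum>k<n. w k * w k) = (\<Sum>k<n. (if k = 0 then 1 else 0) * (1 - 2 * s * u k) + s^2 * (u k)^2)"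
    by (intro sum.cong) (auto simp: w_def power2_eq_square algebra_simps)
  also have "\<dots> = 2 * w 0"
    using n u s by (simp add: sum.distrib sum_mult_delta sum_distrib_left[symmetric] w_def)
  finally have ww: "(\<Sum>k<n. w k * w k) = 2 * w 0" .
  define Q where "Q = mat n n (\<lambda>(i,j). (if i = j then 1 else 0) - w i * w j / w 0)"
  show thesis
  proof (rule that[of Q s])
    show "Q * Q = 1\<^sub>m n" unfolding Q_def using w0 ww by (intro householder_mult_self) auto
    show "Q $$ (k,0) = s * u k" if "k < n" for k using that n w0 by (auto simp: Q_def w_def)
  qed (use s in \<open>auto simp: Q_def symmetric_mat_def mult.commute\<close>)
qed

lemma index_sandwich:
  assumes Q: "Q \<in> carrier_mat n n" and A: "A \<in> carrier_mat n n" and ij: "i < n" "j < n"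
  shows "(Q * A * Q) $$ (i,j) = (\<Sum>l<n. \<Sum>k<n. Q $$ (i,k) * A $$ (k,l) * Q $$ (l,j))"
proof -
  have QA: "Q * A \<in> carrier_mat n n" using Q A by auto
  have "(Q * A * Q) $$ (i,j) = (\<Sum>l<n. (Q * A) $$ (i,l) * Q $$ (l,j))" by (rule index_mult_mat_sum[OF QA Q ij])
  also have "\<dots> = (\<Sum>l<n. (\<Sum>k<n. Q $$ (i,k) * A $$ (k,l)) * Q $$ (l,j))"
    by (rule sum.cong) (auto simp: index_mult_mat_sum[OF Q A] ij)
  finally show ?thesis by (simp add: sum_distrib_right)
qed

lemma quad_form_sandwich:
  fixes Q A :: "'a::comm_semiring_1 mat"
  assumes Q: "Q \<in> carrier_mat n n" and A: "A \<in> carrier_mat n n" and sym: "symmetric_mat n Q"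
  shows "quad_form n (Q * A * Q) x = quad_form n A (\<lambda>k. \<Sum>j<n. Q $$ (k,j) * x j)"
proof -
  have "quad_form n (Q * A * Q) x = (\<Sum>i<n. \<Sum>j<n. \<Sum>l<n. \<Sum>k<n. x i * Q $$ (i,k) * A $$ (k,l) * Q $$ (l,j) * x j)"
    unfolding quad_form_def
    by (intro sum.cong refl) (simp add: index_sandwich[OF Q A] sum_distrib_left sum_distrib_right mult_ac)
  also have "\<dots> = (\<Sum>k<n. \<Sum>l<n. \<Sum>i<n. \<Sum>j<n. x i * Q $$ (i,k) * A $$ (k,l) * Q $$ (l,j) * x j)"
    by (subst (2) sum.swap, subst sum.swap, subst (2) sum.swap, subst (3) sum.swap, subst (2) sum.swap) simp
  also have "\<dots> = quad_form n A (\<lambda>k. \<Sum>j<n. Q $$ (k,j) * x j)"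
    unfolding quad_form_def using sym unfolding symmetric_mat_def
    by (intro sum.cong refl) (simp add: sum_distrib_left sum_distrib_right mult_ac)
  finally show ?thesis .
qed

lemma symmetric_sandwich:
  fixes Q A :: "'a::comm_semiring_0 mat"
  assumes Q: "Q \<in> carrier_mat n n" and A: "A \<in> carrier_mat n n"
    and "symmetric_mat n Q" "symmetric_mat n A"
  shows "symmetric_mat n (Q * A * Q)"
  unfolding symmetric_mat_def
proof (intro allI impI)
  fix i j assume ij: "i < n" "j < n"
  have symQ: "Q $$ (a,b) = Q $$ (b,a)" and symA: "A $$ (a,b) = A $$ (b,a)" if "a < n" "b < n" for a b
    using assms(3,4) that unfolding symmetric_mat_def by auto
  have "(Q * A * Q) $$ (j,i) = (\<Sum>k<n. \<Sum>l<n. Q $$ (j,k) * A $$ (k,l) * Q $$ (l,i))"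
    unfolding index_sandwich[OF Q A ij(2) ij(1)] by (rule sum.swap)
  also have "\<dots> = (\<Sum>k<n. \<Sum>l<n. Q $$ (k,j) * A $$ (l,k) * Q $$ (i,l))"
  proof (intro sum.cong refl)
    fix k l assume "k \<in> {..<n}" "l \<in> {..<n}"
    then show "Q $$ (j,k) * A $$ (k,l) * Q $$ (l,i) = Q $$ (k,j) * A $$ (l,k) * Q $$ (i,l)"
      using ij symQ[of j k] symQ[of l i] symA[of k l] by simp
  qed
  also have "\<dots> = (Q * A * Q) $$ (i,j)"
    unfolding index_sandwich[OF Q A ij] by (intro sum.cong refl) (simp add: mult_ac)
  finally show "(Q * A * Q) $$ (i,j) = (Q * A * Q) $$ (j,i)" by simp
qed

lemma trace_sandwich_involution:
  fixes Q A :: "'a::comm_semiring_1 mat"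
  assumes Q: "Q \<in> carrier_mat n n" and A: "A \<in> carrier_mat n n" and QQ: "Q * Q = 1\<^sub>m n"
  shows "(\<Sum>i<n. (Q * A * Q) $$ (i,i)) = (\<Sum>i<n. A $$ (i,i))"
proof -
  have QQ_entry: "(\<Sum>i<n. Q $$ (l,i) * Q $$ (i,k)) = (if k = l then 1 else 0)" if "l < n" "k < n" for l k
    using index_mult_mat_sum[OF Q Q that] QQ that by auto
  have "(\<Sum>i<n. (Q * A * Q) $$ (i,i)) = (\<Sum>i<n. \<Sum>l<n. \<Sum>k<n. Q $$ (i,k) * A $$ (k,l) * Q $$ (l,i))"
    by (intro sum.cong refl) (simp add: index_sandwich[OF Q A])
  also have "\<dots> = (\<Sum>l<n. \<Sum>i<n. \<Sum>k<n. Q $$ (i,k) * A $$ (k,l) * Q $$ (l,i))" by (rule sum.swap)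
  also have "\<dots> = (\<Sum>l<n. \<Sum>k<n. \<Sum>i<n. Q $$ (i,k) * A $$ (k,l) * Q $$ (l,i))"
    by (rule sum.cong[OF refl], rule sum.swap)
  also have "\<dots> = (\<Sum>l<n. \<Sum>k<n. A $$ (k,l) * (\<Sum>i<n. Q $$ (l,i) * Q $$ (i,k)))"
    unfolding sum_distrib_left by (intro sum.cong refl) (simp add: mult_ac)
  also have "\<dots> = (\<Sum>l<n. A $$ (l,l))"
    by (intro sum.cong refl) (simp add: QQ_entry sum_mult_delta)
  finally show ?thesis .
qed

lemma index_sandwich_first_diag:
  fixes Q C :: "real mat"
  assumes Q: "Q \<in> carrier_mat n n" and C: "C \<in> carrier_mat n n" and sym: "symmetric_mat n Q"
    and n: "0 < n" and s: "s^2 = 1" and col: "\<And>k. k < n \<Longrightarrow> Q $$ (k,0) = s * u k"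
  shows "(Q * C * Q) $$ (0,0) = quad_form n C u"
proof -
  have "(Q * C * Q) $$ (0,0) = quad_form n (Q * C * Q) (\<lambda>i. if i = 0 then 1 else 0)"
    using n by (simp add: quad_form_unit_vector)
  also have "\<dots> = quad_form n C (\<lambda>k. \<Sum>j<n. Q $$ (k,j) * (if j = 0 then 1 else 0))"
    by (rule quad_form_sandwich[OF Q C sym])
  also have "\<dots> = quad_form n C (\<lambda>k. s * u k)"
    unfolding quad_form_def using n by (intro sum.cong refl) (simp add: sum_mult_delta col)
  finally show ?thesis using s by (simp add: quad_form_smult_vec)
qed

lemma det_le_quad_form_mean_power:
  fixes C :: "real mat"
  assumes C: "C \<in> carrier_mat n n" and sym: "symmetric_mat n C" and psd: "psd_mat n C"
    and n: "n \<ge> 2" and u: "(\<Sum>i<n. (u i)^2) = 1"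
  defines "T \<equiv> \<Sum>i<n. C $$ (i,i)"
  shows "det C \<le> quad_form n C u * ((T - quad_form n C u) / (real n - 1)) ^ (n - 1)"
    and "quad_form n C u \<le> T"
proof -
  obtain Q s where Q: "Q \<in> carrier_mat n n" and symQ: "symmetric_mat n Q" and QQ: "Q * Q = 1\<^sub>m n"
    and s: "s^2 = 1" and col: "\<And>k. k < n \<Longrightarrow> Q $$ (k,0) = s * u k"
    using householder_first_column[of n u] n u by auto
  define C' where "C' = Q * C * Q"
  have C': "C' \<in> carrier_mat n n" using Q C by (simp add: C'_def)
  have detQ: "det Q * det Q = 1" using det_mult[OF Q Q] QQ by simp
  have "det C' = det Q * det C * det Q"
    unfolding C'_def det_mult[OF mult_carrier_mat[OF Q C] Q] det_mult[OF Q C] ..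
  also have "\<dots> = det C * (det Q * det Q)" by (simp only: mult_ac)
  finally have det: "det C' = det C" unfolding detQ by simp
  have psd': "psd_mat n C'"
    using psd unfolding psd_mat_def C'_def quad_form_sandwich[OF Q C symQ] by blast
  \<comment> \<open>in the reflected basis the first diagonal entry is the Rayleigh quotient\<close>
  have pivot: "C' $$ (0,0) = quad_form n C u"
    unfolding C'_def using n by (intro index_sandwich_first_diag[OF Q C symQ _ s col]) simp
  obtain m where nm: "n = Suc m" and m: "m \<ge> 1" using n by (cases n) auto
  have trace: "T = quad_form n C u + (\<Sum>i<m. C' $$ (Suc i, Suc i))"
    using trace_sandwich_involution[OF Q C QQ] pivot unfolding T_def C'_def[symmetric] nm
    by (simp only: sum.lessThan_Suc_shift)
  have "det C \<le> quad_form n C u * ((\<Sum>i<m. C' $$ (Suc i, Suc i)) / m) ^ m"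
    using det_le_pivot_mean_power[of C' m] C' psd' m pivot det symmetric_sandwich[OF Q C symQ sym]
    unfolding nm C'_def by simp
  then show "det C \<le> quad_form n C u * ((T - quad_form n C u) / (real n - 1)) ^ (n - 1)"
    using trace nm by simp
  have "0 \<le> (\<Sum>i<m. C' $$ (Suc i, Suc i))"
    using psd_mat_diag_nonneg[OF psd'] nm by (intro sum_nonneg) simp
  then show "quad_form n C u \<le> T" using trace by simp
qed

section \<open>Deviation of the Rayleigh quotient from the mean eigenvalue\<close>

lemma Cauchy_Schwarz_ineq_double_sum:
  fixes f g :: "nat \<Rightarrow> nat \<Rightarrow> real"
  shows "(\<Sum>i<n. \<Sum>j<n. f i j * g i j)^2 \<le> (\<Sum>i<n. \<Sum>j<n. (f i j)^2) * (\<Sum>i<n. \<Sum>j<n. (g i j)^2)"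
proof -
  have e: "(\<Sum>i<n. \<Sum>j<n. h i j) = (\<Sum>p\<in>{..<n}\<times>{..<n}. h (fst p) (snd p))" for h :: "nat \<Rightarrow> nat \<Rightarrow> real"
    by (subst sum.cartesian_product) (simp add: case_prod_beta)
  show ?thesis unfolding e by (rule Cauchy_Schwarz_ineq_sum)
qed

lemma sum_shifted_mat_times_shifted_outer:
  fixes A :: "real mat"
  assumes n: "n \<ge> 1" and u: "(\<Sum>i<n. (u i)^2) = 1"
  shows "(\<Sum>i<n. \<Sum>j<n. (A $$ (i,j) - (if i = j then m else 0)) * (u i * u j - (if i = j then 1 / n else 0)))
    = quad_form n A u - (\<Sum>i<n. A $$ (i,i)) / n"
proof -
  have "(\<Sum>i<n. \<Sum>j<n. (A $$ (i,j) - (if i = j then m else 0)) * (u i * u j - (if i = j then 1 / n else 0)))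
      = (\<Sum>i<n. (\<Sum>j<n. u i * A $$ (i,j) * u j) - A $$ (i,i) * (u i)^2 + (A $$ (i,i) - m) * ((u i)^2 - 1/n))"
  proof (rule sum.cong[OF refl])
    fix i assume i: "i \<in> {..<n}"
    have "(\<Sum>j<n. (A $$ (i,j) - (if i = j then m else 0)) * (u i * u j - (if i = j then 1 / n else 0)))
        = (\<Sum>j<n. if j = i then (A $$ (i,i) - m) * ((u i)^2 - 1/n) else u i * A $$ (i,j) * u j)"
      by (rule sum.cong) (auto simp: power2_eq_square mult_ac)
    also have "\<dots> = (\<Sum>j<n. u i * A $$ (i,j) * u j) - A $$ (i,i) * (u i)^2 + (A $$ (i,i) - m) * ((u i)^2 - 1/n)"
      using i by (subst sum_if_eq) (auto simp: power2_eq_square mult_ac)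
    finally show "(\<Sum>j<n. (A $$ (i,j) - (if i = j then m else 0)) * (u i * u j - (if i = j then 1 / n else 0))) = \<dots>" .
  qed
  also have "\<dots> = quad_form n A u - (\<Sum>i<n. A $$ (i,i)) / n - m * (\<Sum>i<n. (u i)^2) + m * n / n"
    by (simp add: quad_form_def sum.distrib sum_subtractf algebra_simps sum_divide_distrib[symmetric]
        sum_distrib_left[symmetric])
  also have "\<dots> = quad_form n A u - (\<Sum>i<n. A $$ (i,i)) / n" using n u by simp
  finally show ?thesis .
qed

lemma sum_sq_shifted_mat:
  fixes A :: "real mat"
  shows "(\<Sum>i<n. \<Sum>j<n. (A $$ (i,j) - (if i = j then m else 0))^2)
    = (\<Sum>i<n. \<Sum>j<n. (A $$ (i,j))^2) - 2 * m * (\<Sum>i<n. A $$ (i,i)) + n * m^2"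
proof -
  have "(\<Sum>i<n. \<Sum>j<n. (A $$ (i,j) - (if i = j then m else 0))^2)
      = (\<Sum>i<n. (\<Sum>j<n. (A $$ (i,j))^2) - (A $$ (i,i))^2 + (A $$ (i,i) - m)^2)"
  proof (rule sum.cong[OF refl])
    fix i assume i: "i \<in> {..<n}"
    have "(\<Sum>j<n. (A $$ (i,j) - (if i = j then m else 0))^2)
        = (\<Sum>j<n. if j = i then (A $$ (i,i) - m)^2 else (A $$ (i,j))^2)"
      by (rule sum.cong) auto
    also have "\<dots> = (\<Sum>j<n. (A $$ (i,j))^2) - (A $$ (i,i))^2 + (A $$ (i,i) - m)^2"
      using i by (subst sum_if_eq) auto
    finally show "(\<Sum>j<n. (A $$ (i,j) - (if i = j then m else 0))^2) = \<dots>" .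
  qed
  also have "\<dots> = (\<Sum>i<n. \<Sum>j<n. (A $$ (i,j))^2) - 2 * m * (\<Sum>i<n. A $$ (i,i)) + n * m^2"
    by (simp add: sum.distrib sum_subtractf power2_diff sum_distrib_left[symmetric] algebra_simps)
  finally show ?thesis .
qed

lemma sum_sq_shifted_outer:
  assumes n: "n \<ge> 1" and u: "(\<Sum>i<n. (u i)^2) = (1::real)"
  shows "(\<Sum>i<n. \<Sum>j<n. (u i * u j - (if i = j then 1 / n else 0))^2) = (real n - 1) / n"
proof -
  have "(\<Sum>i<n. \<Sum>j<n. (u i * u j - (if i = j then 1 / n else 0))^2)
      = (\<Sum>i<n. (u i)^2 * (\<Sum>j<n. (u j)^2) - (u i)^2 * (u i)^2 + ((u i)^2 - 1/n)^2)"
  proof (rule sum.cong[OF refl])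
    fix i assume i: "i \<in> {..<n}"
    have "(\<Sum>j<n. (u i * u j - (if i = j then 1 / n else 0))^2)
        = (\<Sum>j<n. if j = i then ((u i)^2 - 1/n)^2 else (u i)^2 * (u j)^2)"
      by (rule sum.cong) (auto simp: power2_eq_square mult_ac)
    also have "\<dots> = (\<Sum>j<n. (u i)^2 * (u j)^2) - (u i)^2 * (u i)^2 + ((u i)^2 - 1/n)^2"
      using i by (subst sum_if_eq) auto
    finally show "(\<Sum>j<n. (u i * u j - (if i = j then 1 / n else 0))^2)
        = (u i)^2 * (\<Sum>j<n. (u j)^2) - (u i)^2 * (u i)^2 + ((u i)^2 - 1/n)^2"
      by (simp add: sum_distrib_left)
  qed
  also have "\<dots> = (\<Sum>i<n. (u i)^2 - 2 / n * (u i)^2 + 1 / n^2)"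
    using u by (intro sum.cong refl) (simp add: power2_diff power2_eq_square field_simps)
  also have "\<dots> = 1 - 2 / n + n / n^2"
    using u by (simp add: sum.distrib sum_subtractf sum_distrib_left[symmetric] sum_divide_distrib[symmetric])
  also have "\<dots> = (real n - 1) / n" using n by (simp add: field_simps power2_eq_square)
  finally show ?thesis .
qed

lemma quad_form_minus_mean_sq_le:
  fixes A :: "real mat"
  assumes n: "n \<ge> 1" and u: "(\<Sum>i<n. (u i)^2) = 1"
  defines "T \<equiv> \<Sum>i<n. A $$ (i,i)" and "F \<equiv> \<Sum>i<n. \<Sum>j<n. (A $$ (i,j))^2"
  shows "(quad_form n A u - T / n)^2 \<le> (real n - 1) * (real n * F - T^2) / n^2"
proof -
  have "(quad_form n A u - T / n)^2 \<le> (F - 2 * (T / n) * T + n * (T / n)^2) * ((real n - 1) / n)"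
    using Cauchy_Schwarz_ineq_double_sum[of "\<lambda>i j. A $$ (i,j) - (if i = j then T / n else 0)"
        "\<lambda>i j. u i * u j - (if i = j then 1 / n else 0)" n]
    unfolding sum_shifted_mat_times_shifted_outer[OF n u] sum_sq_shifted_mat sum_sq_shifted_outer[OF n u]
      T_def[symmetric] F_def[symmetric] .
  also have "\<dots> = (real n - 1) * (real n * F - T^2) / n^2"
    using n by (simp add: field_simps power2_eq_square)
  finally show ?thesis .
qed

lemma quad_form_minus_mean_le:
  fixes A :: "real mat"
  assumes "n \<ge> 1" and "(\<Sum>i<n. (u i)^2) = 1"
  defines "T \<equiv> \<Sum>i<n. A $$ (i,i)" and "F \<equiv> \<Sum>i<n. \<Sum>j<n. (A $$ (i,j))^2"
  shows "\<bar>quad_form n A u - T / n\<bar> \<le> sqrt ((real n - 1) * (real n * F - T^2)) / n"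
proof -
  have "sqrt ((quad_form n A u - T / n)^2) \<le> sqrt ((real n - 1) * (real n * F - T^2) / n^2)"
    using quad_form_minus_mean_sq_le[OF assms(1,2)] unfolding T_def F_def by (rule real_sqrt_le_mono)
  then show ?thesis by (simp add: real_sqrt_divide)
qed

lemma quad_form_ge_det_bound:
  fixes A :: "real mat"
  assumes A: "A \<in> carrier_mat n n" and sym: "symmetric_mat n A" and psd: "psd_mat n A"
    and n: "n \<ge> 2" and u: "(\<Sum>i<n. (u i)^2) = 1"
  defines "T \<equiv> \<Sum>i<n. A $$ (i,i)" and "F \<equiv> \<Sum>i<n. \<Sum>j<n. (A $$ (i,j))^2"
  shows "det A / ((sqrt (real n - 1) * T + sqrt (real n * F - T^2)) / (real n * sqrt (real n - 1))) ^ (n - 1)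
    \<le> quad_form n A u"
proof -
  define \<rho> where "\<rho> = quad_form n A u"
  define r where "r = sqrt (real n - 1)"
  define D where "D = sqrt (real n * F - T^2)"
  define B where "B = (r * T + D) / (real n * r)"
  have r: "r > 0" "r^2 = real n - 1" using n by (simp_all add: r_def)
  have \<rho>: "\<rho> \<ge> 0" using psd unfolding psd_mat_def \<rho>_def by blast
  have det: "det A \<le> \<rho> * ((T - \<rho>) / (real n - 1)) ^ (n - 1)" and "\<rho> \<le> T"
    using det_le_quad_form_mean_power[OF A sym psd n u] unfolding \<rho>_def T_def by auto
  then have mean_nonneg: "(T - \<rho>) / (real n - 1) \<ge> 0" using n by simp
  have "T / n - \<rho> \<le> r * D / n"
    using quad_form_minus_mean_le[of n u A] n u unfolding \<rho>_def T_def F_def r_def D_def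
    by (simp add: real_sqrt_mult abs_le_iff)
  then have "real n * (T / n - \<rho>) \<le> real n * (r * D / n)" by (intro mult_left_mono) auto
  then have "T - real n * \<rho> \<le> r * D" using n by (simp add: right_diff_distrib)
  moreover have "r * (r * T + D) = (real n - 1) * T + r * D"
    using r(2) by (simp add: distrib_left mult.assoc[symmetric] power2_eq_square)
  ultimately have bound: "real n * (T - \<rho>) \<le> r * (r * T + D)" by (simp add: algebra_simps)
  \<comment> \<open>B is the bound this estimate gives for the mean of the remaining diagonal entries\<close>
  have "(T - \<rho>) / (real n - 1) = real n * (T - \<rho>) / (real n * r^2)" using n r by simp
  also have "\<dots> \<le> r * (r * T + D) / (real n * r^2)" using bound by (intro divide_right_mono mult_nonneg_nonneg) auto
  also have "\<dots> = B" unfolding B_def using r n by (simp add: power2_eq_square field_simps)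
  finally have mean_le: "(T - \<rho>) / (real n - 1) \<le> B" .
  have "det A \<le> \<rho> * B ^ (n - 1)"
    using det mult_left_mono[OF power_mono[OF mean_le mean_nonneg, of "n - 1"] \<rho>] by linarith
  moreover have "B \<ge> 0" using mean_nonneg mean_le by linarith
  ultimately have "det A / B ^ (n - 1) \<le> \<rho>"
    using \<rho> by (cases "B = 0") (simp_all add: divide_le_eq)
  then show ?thesis by (simp add: B_def r_def D_def \<rho>_def)
qed


section \<open>The covariance matrices\<close>

lemma x_par_pos:
  assumes "\<tau> 0 > - real d / 2" and "\<And>i j. i < j \<Longrightarrow> j < n \<Longrightarrow> \<tau> i < \<tau> j" and "i < n"
  shows "x_par d \<tau> i > 0"
proof -
  have "\<tau> 0 \<le> \<tau> i" using assms(2)[of 0 i] assms(3) by (cases "i = 0") force+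
  then show ?thesis using assms(1) by (simp add: x_par_def)
qed

lemma Sigma_sb_eq_smult_cauchy_mat:
  "Sigma_sb n d V \<tau> = (V * real d * unit_ball_vol (real d) / 2) \<cdot>\<^sub>m cauchy_mat n (x_par d \<tau>)"
  by (rule eq_matI) (auto simp: Sigma_sb_def cauchy_mat_def)

lemma cauchy_mat_x_par_trace_frobenius:
  fixes n d :: nat and \<tau> :: "nat \<Rightarrow> real"
  defines "T \<equiv> \<Sum>i<n. cauchy_mat n (x_par d \<tau>) $$ (i,i)"
    and "F \<equiv> \<Sum>i<n. \<Sum>j<n. (cauchy_mat n (x_par d \<tau>) $$ (i,j))^2"
  shows "(\<Sum>i<n. 1 / (2 * x_par d \<tau> i)) = T" and "Q_par n d \<tau> = real n * F - T^2"
proof -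
  show T: "(\<Sum>i<n. 1 / (2 * x_par d \<tau> i)) = T"
    unfolding T_def cauchy_mat_def by (intro sum.cong refl) simp
  show "Q_par n d \<tau> = real n * F - T^2"
    unfolding Q_par_def T F_def cauchy_mat_def sum_distrib_left
    by (intro arg_cong2[where f = "(-)"] sum.cong refl) (simp add: power_divide add.commute)
qed

lemma S_upper_eq_cauchy_mat:
  fixes n d :: nat and \<tau> :: "nat \<Rightarrow> real"
  defines "T \<equiv> \<Sum>i<n. cauchy_mat n (x_par d \<tau>) $$ (i,i)"
    and "F \<equiv> \<Sum>i<n. \<Sum>j<n. (cauchy_mat n (x_par d \<tau>) $$ (i,j))^2"
  shows "S_upper n d V \<tau> = V * real d * unit_ball_vol (real d) / 2
    * ((T + sqrt ((real n - 1) * (real n * F - T^2))) / n)"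
proof -
  have half: "a * X / (2 * m) = a / 2 * (X / m)" for a X m :: real by simp
  show ?thesis
    unfolding S_upper_def half cauchy_mat_x_par_trace_frobenius[where n = n and d = d and \<tau> = \<tau>, folded T_def F_def] ..
qed

lemma S_lower_eq_cauchy_mat:
  fixes n d :: nat and \<tau> :: "nat \<Rightarrow> real"
  assumes x: "\<And>i. i < n \<Longrightarrow> x_par d \<tau> i > 0"
  defines "T \<equiv> \<Sum>i<n. cauchy_mat n (x_par d \<tau>) $$ (i,i)"
    and "F \<equiv> \<Sum>i<n. \<Sum>j<n. (cauchy_mat n (x_par d \<tau>) $$ (i,j))^2"
  shows "S_lower n d V \<tau> = V * real d * unit_ball_vol (real d) / 2
    * (det (cauchy_mat n (x_par d \<tau>)) / ((sqrt (real n - 1) * T + sqrt (real n * F - T^2)) / (real n * sqrt (real n - 1))) ^ (n - 1))"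
proof -
  have half: "a * P / (2 * D * E) = a / 2 * (P / D / E)" for a P D E :: real
    by (simp add: mult.assoc)
  note T_Q = cauchy_mat_x_par_trace_frobenius[where n = n and d = d and \<tau> = \<tau>, folded T_def F_def]
  have "x_par d \<tau> i + x_par d \<tau> j \<noteq> 0" if "i < n" "j < n" for i j
    using x[OF that(1)] x[OF that(2)] by simp
  then have "det (cauchy_mat n (x_par d \<tau>))
      = (\<Prod>j<n. \<Prod>i<j. (x_par d \<tau> i - x_par d \<tau> j)^2) / (\<Prod>i<n. \<Prod>j<n. x_par d \<tau> i + x_par d \<tau> j)"
    by (rule det_cauchy_mat)
  moreover have "(\<Sum>i<n. sqrt (real n - 1) / (2 * x_par d \<tau> i)) = sqrt (real n - 1) * T"
    unfolding T_Q(1)[symmetric] sum_distrib_left by simp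
  ultimately show ?thesis unfolding S_lower_def half T_Q(2) by (simp only:)
qed

lemma Sigma_sb_quad_form_bounds:
  assumes n: "n \<ge> 2" and V: "V \<ge> 0" and x: "\<And>i. i < n \<Longrightarrow> x_par d \<tau> i > 0"
    and u: "(\<Sum>i<n. (u i)^2) = 1"
  shows "S_lower n d V \<tau> \<le> quad_form n (Sigma_sb n d V \<tau>) u"
    and "quad_form n (Sigma_sb n d V \<tau>) u \<le> S_upper n d V \<tau>"
proof -
  define K where "K = V * real d * unit_ball_vol (real d) / 2"
  define C where "C = cauchy_mat n (x_par d \<tau>)"
  define T where "T = (\<Sum>i<n. C $$ (i,i))"
  define F where "F = (\<Sum>i<n. \<Sum>j<n. (C $$ (i,j))^2)"
  have K: "K \<ge> 0" using V by (simp add: K_def)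
  have C: "C \<in> carrier_mat n n" by (simp add: C_def cauchy_mat_def)
  have qf: "quad_form n (Sigma_sb n d V \<tau>) u = K * quad_form n C u"
    unfolding Sigma_sb_eq_smult_cauchy_mat K_def C_def by (rule quad_form_smult_mat) (simp add: cauchy_mat_def)
  have "quad_form n C u \<le> (T + sqrt ((real n - 1) * (real n * F - T^2))) / n"
    using quad_form_minus_mean_le[of n u C] n u unfolding T_def F_def
    by (simp add: abs_le_iff add_divide_distrib)
  then have "K * quad_form n C u \<le> K * ((T + sqrt ((real n - 1) * (real n * F - T^2))) / n)"
    using K by (rule mult_left_mono)
  also have "\<dots> = S_upper n d V \<tau>"
    unfolding K_def T_def F_def C_def by (rule S_upper_eq_cauchy_mat[symmetric])
  finally show "quad_form n (Sigma_sb n d V \<tau>) u \<le> S_upper n d V \<tau>" unfolding qf .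
  have "symmetric_mat n C" "psd_mat n C"
    unfolding C_def by (rule symmetric_cauchy_mat, rule psd_cauchy_mat[OF x])
  then have "det C / ((sqrt (real n - 1) * T + sqrt (real n * F - T^2)) / (real n * sqrt (real n - 1))) ^ (n - 1)
      \<le> quad_form n C u"
    unfolding T_def F_def by (rule quad_form_ge_det_bound[OF C _ _ n u])
  then have "K * (det C / ((sqrt (real n - 1) * T + sqrt (real n * F - T^2)) / (real n * sqrt (real n - 1))) ^ (n - 1))
      \<le> K * quad_form n C u"
    using K by (rule mult_left_mono)
  moreover have "S_lower n d V \<tau>
      = K * (det C / ((sqrt (real n - 1) * T + sqrt (real n * F - T^2)) / (real n * sqrt (real n - 1))) ^ (n - 1))"
    unfolding K_def T_def F_def C_def by (rule S_lower_eq_cauchy_mat[OF x])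
  ultimately show "S_lower n d V \<tau> \<le> quad_form n (Sigma_sb n d V \<tau>) u" unfolding qf by simp
qed

lemma quad_form_Sigma_sp:
  "quad_form n (Sigma_sp n d V \<tau>) u = V * real d ^ 2 * unit_ball_vol (real d) ^ 2 * (\<Sum>i<n. u i / a_par d \<tau> i)^2"
proof -
  have "quad_form n (Sigma_sp n d V \<tau>) u = (\<Sum>i<n. \<Sum>j<n. V * real d ^ 2 * unit_ball_vol (real d) ^ 2
      * ((u i / a_par d \<tau> i) * (u j / a_par d \<tau> j)))"
    unfolding quad_form_def Sigma_sp_def by (intro sum.cong refl) (simp add: field_simps)
  also have "\<dots> = V * real d ^ 2 * unit_ball_vol (real d) ^ 2 * (\<Sum>i<n. \<Sum>j<n. (u i / a_par d \<tau> i) * (u j / a_par d \<tau> j))"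
    by (simp add: sum_distrib_left)
  also have "\<dots> = V * real d ^ 2 * unit_ball_vol (real d) ^ 2 * (\<Sum>i<n. u i / a_par d \<tau> i)^2"
    by (simp add: power2_eq_square sum_product)
  finally show ?thesis .
qed

lemma Sigma_sp_quad_form_bounds:
  assumes V: "V \<ge> 0" and u: "(\<Sum>i<n. (u i)^2) = 1"
  shows "0 \<le> quad_form n (Sigma_sp n d V \<tau>) u"
    and "quad_form n (Sigma_sp n d V \<tau>) u \<le> (\<Sum>i<n. V * real d ^ 2 * unit_ball_vol (real d) ^ 2 / (a_par d \<tau> i)^2)"
proof -
  define K where "K = V * real d ^ 2 * unit_ball_vol (real d) ^ 2"
  have K: "K \<ge> 0" using V by (simp add: K_def)
  have "(\<Sum>i<n. u i / a_par d \<tau> i)^2 \<le> (\<Sum>i<n. (u i)^2) * (\<Sum>i<n. (1 / a_par d \<tau> i)^2)"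
    using Cauchy_Schwarz_ineq_sum[of u "\<lambda>i. 1 / a_par d \<tau> i" "{..<n}"] by simp
  moreover have "(\<Sum>i<n. K / (a_par d \<tau> i)^2) = K * (\<Sum>i<n. (1 / a_par d \<tau> i)^2)"
    by (simp add: sum_distrib_left power_divide)
  ultimately show "quad_form n (Sigma_sp n d V \<tau>) u \<le> (\<Sum>i<n. V * real d ^ 2 * unit_ball_vol (real d) ^ 2 / (a_par d \<tau> i)^2)"
    unfolding quad_form_Sigma_sp K_def[symmetric] u using K by (simp add: mult_left_mono)
  show "0 \<le> quad_form n (Sigma_sp n d V \<tau>) u"
    unfolding quad_form_Sigma_sp K_def[symmetric] using K by simp
qed

lemma Sigma_cr_carrier: "Sigma_cr n d V c \<tau> \<in> carrier_mat n n"
  by (simp add: Sigma_cr_def Sigma_sb_def Sigma_sp_def)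

lemma Sigma_cr_eigenvalue_bounds:
  assumes n: "n \<ge> 2" and V: "V \<ge> 0" and c: "c > 0" and x: "\<And>i. i < n \<Longrightarrow> x_par d \<tau> i > 0"
    and "eigenvalue (Sigma_cr n d V c \<tau>) l"
  shows "if c \<le> 1 then
        S_lower n d V \<tau> \<le> l \<and>
        l \<le> S_upper n d V \<tau> + (\<Sum>i<n. c * V * real d ^ 2 * unit_ball_vol (real d) ^ 2 / (a_par d \<tau> i)^2)
      else
        S_lower n d V \<tau> / c \<le> l \<and>
        l \<le> S_upper n d V \<tau> / c + (\<Sum>i<n. V * real d ^ 2 * unit_ball_vol (real d) ^ 2 / (a_par d \<tau> i)^2)"
proof -
  obtain u where u: "(\<Sum>i<n. (u i)^2) = 1" and l: "quad_form n (Sigma_cr n d V c \<tau>) u = l"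
    by (rule eigenvalue_unit_quad_form[OF Sigma_cr_carrier assms(5)])
  define sb where "sb = quad_form n (Sigma_sb n d V \<tau>) u"
  define sp where "sp = quad_form n (Sigma_sp n d V \<tau>) u"
  define G where "G = (\<Sum>i<n. V * real d ^ 2 * unit_ball_vol (real d) ^ 2 / (a_par d \<tau> i)^2)"
  have lower: "S_lower n d V \<tau> \<le> sb" and upper: "sb \<le> S_upper n d V \<tau>"
    unfolding sb_def using Sigma_sb_quad_form_bounds[OF n V x u] by simp_all
  have "0 \<le> sp" "sp \<le> G"
    unfolding sp_def G_def using Sigma_sp_quad_form_bounds[OF V u] by simp_all
  have l_eq: "l = (if c \<le> 1 then sb + c * sp else sb / c + sp)"
    unfolding l[symmetric] sb_def sp_def Sigma_cr_def
    by (simp add: quad_form_add quad_form_smult_mat Sigma_sb_def Sigma_sp_def)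
  show ?thesis
  proof (cases "c \<le> 1")
    case True
    have "(\<Sum>i<n. c * V * real d ^ 2 * unit_ball_vol (real d) ^ 2 / (a_par d \<tau> i)^2) = c * G"
      unfolding G_def by (simp add: sum_distrib_left mult.assoc)
    moreover have "0 \<le> c * sp" "c * sp \<le> c * G"
      using \<open>0 \<le> sp\<close> \<open>sp \<le> G\<close> c by (simp_all add: mult_left_mono)
    ultimately show ?thesis using True l_eq lower upper by simp
  next
    case False
    have "S_lower n d V \<tau> / c \<le> sb / c" "sb / c \<le> S_upper n d V \<tau> / c"
      using lower upper c by (simp_all add: divide_right_mono)
    then show ?thesis using False l_eq \<open>0 \<le> sp\<close> \<open>sp \<le> G\<close> by (simp add: G_def)
  qed
qed

theorem theorem7p6:
  fixes n d :: nat and V c :: real and \<tau> :: "nat \<Rightarrow> real"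
  assumes "d \<ge> 1" and "n \<ge> 2" and "V \<ge> 0" and "c > 0"
    and "\<tau> 0 > - real d / 2"
    and "\<And>i j. i < j \<Longrightarrow> j < n \<Longrightarrow> \<tau> i < \<tau> j"
  shows "\<forall>l. eigenvalue (Sigma_cr n d V c \<tau>) l \<longrightarrow>
     (if c \<le> 1 then
        S_lower n d V \<tau> \<le> l \<and>
        l \<le> S_upper n d V \<tau> + (\<Sum>i<n. c * V * real d ^ 2 * unit_ball_vol (real d) ^ 2 / (a_par d \<tau> i)^2)
      else
        S_lower n d V \<tau> / c \<le> l \<and>
        l \<le> S_upper n d V \<tau> / c + (\<Sum>i<n. V * real d ^ 2 * unit_ball_vol (real d) ^ 2 / (a_par d \<tau> i)^2))"
proof -
  have x: "\<And>i. i < n \<Longrightarrow> x_par d \<tau> i > 0" using assms(5,6) by (rule x_par_pos)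
  show ?thesis by (intro allI impI) (rule Sigma_cr_eigenvalue_bounds[OF assms(2-4) x])
qed

end
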